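(* Consider the following multi-cell downlink scheduling model. Time is slotted, $t=1,2,\ldots$. There are $N$ user equipments $\mathrm{UE}_1,\ldots,\mathrm{UE}_N$ and $M$ base stations $\mathrm{BS}_1,\ldots,\mathrm{BS}_M$, each base station covering one cell. At every slot $t$, each $\mathrm{UE}_i$ lies in the cell of exactly one base station, denoted $C_i(t)\in\{1,\ldots,M\}$. Assume i.i.d. uniform mobility: the random variables $C_i(t)$ are independent across users $i$ and slots $t$, each uniformly distributed on $\{1,\ldots,M\}$. At each slot, each $\mathrm{BS}_j$ may attempt a transmission of a fresh packet to at most one UE currently in its cell (i.e. a UE with $C_i(t)=j$). A transmission attempted to $\mathrm{UE}_i$ succeeds with probability $p_i$, independently of everything else; assume statistically identical UEs, $p_i=p\in(0,1]$ for all $i$. The age of information $h_i(t)$ of $\mathrm{UE}_i$ evolves as $h_i(t+1)=1$ if $\mathrm{UE}_i$ was scheduled at slot $t$ and the transmission succeeded, and $h_i(t+1)=h_i(t)+1$ otherwise. For a causal (online) scheduling policy $\pi$, its average AoI is $\mathsf{AoI}^{\pi}=\limsup_{T\to\infty}\frac{1}{NT}\sum_{t=1}^{T}\sum_{i=1}^{N}\mathbb{E}^{\pi}[h_i(t)]$, and $\mathsf{AoI}^*$ denotes the infimum of $\mathsf{AoI}^\pi$ over all such policies. Let $\pi^{\mathsf{MMW}}$ be the policy under which, at every slot $t$, each base station schedules, among the UEs in its cell, one with the largest index $I_i(t)=p_i h_i(t)^2$. Then $\pi^{\mathsf{MMW}}$ is a $2$-approximation, i.e. $\mathsf{AoI}^{\pi^{\mathsf{MMW}}}\le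 2\,\mathsf{AoI}^*$.
   Context: A scheduling policy is causal/online if its decision at each slot depends only on the history of ages, cell occupancies and scheduling decisions observed so far (together with the current cell occupancy). The stationary cell-occupancy distribution in the i.i.d. uniform mobility model is $\psi_{ij}=1/M$ for all $i,j$. A base station whose cell contains no UE makes no transmission. *)

theory Defs
  imports "HOL-Probability.Probability"
begin

text \<open>UEs are indexed 0..N-1, base stations (cells) 0..M-1. Slot t (0-based here)
  corresponds to slot t+1 of the paper.\<close>

type_synonym ages = "nat \<Rightarrow> nat"
type_synonym occupancy = "nat \<Rightarrow> nat"
type_synonym schedule = "nat set"
type_synonym history = "(ages \<times> occupancy \<times> schedule) list"
type_synonym policy = "history \<Rightarrow> ages \<Rightarrow> occupancy \<Rightarrow> schedule"

definition occ_set :: "nat \<Rightarrow> nat \<Rightarrow> occupancy set" where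
  "occ_set N M = {c. (\<forall>i<N. c i < M) \<and> (\<forall>i. N \<le> i \<longrightarrow> c i = 0)}"

text \<open>i.i.d. uniform mobility: all C_i(t) independent and uniform on the M cells.\<close>
definition occ_pmf :: "nat \<Rightarrow> nat \<Rightarrow> occupancy pmf" where
  "occ_pmf N M = pmf_of_set (occ_set N M)"

text \<open>A feasible schedule: only UEs, each base station serves at most one UE of its cell
  (the UE i is served by base station c i, the one whose cell it lies in).\<close>
definition valid_sched :: "nat \<Rightarrow> occupancy \<Rightarrow> schedule \<Rightarrow> bool" where
  "valid_sched N c S \<longleftrightarrow> S \<subseteq> {..<N} \<and> (\<forall>i\<in>S. \<forall>k\<in>S. c i = c k \<longrightarrow> i = k)"

definition valid_policy :: "nat \<Rightarrow> policy \<Rightarrow> bool" where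
  "valid_policy N \<pi> \<longleftrightarrow> (\<forall>H h c. valid_sched N c (\<pi> H h c))"

fun state_pmf :: "nat \<Rightarrow> nat \<Rightarrow> real \<Rightarrow> ages \<Rightarrow> policy \<Rightarrow> nat \<Rightarrow> (history \<times> ages) pmf" where
  "state_pmf N M p h0 \<pi> 0 = return_pmf ([], h0)"
| "state_pmf N M p h0 \<pi> (Suc t) =
     do { (H, h) \<leftarrow> state_pmf N M p h0 \<pi> t;
          c \<leftarrow> occ_pmf N M;
          let S = \<pi> H h c;
          succ \<leftarrow> Pi_pmf S False (\<lambda>_. bernoulli_pmf p);
          return_pmf (H @ [(h, c, S)], (\<lambda>i. if i \<in> S \<and> succ i then 1 else h i + 1)) }"

definition exp_age :: "nat \<Rightarrow> nat \<Rightarrow> real \<Rightarrow> ages \<Rightarrow> policy \<Rightarrow> nat \<Rightarrow> nat \<Rightarrow> real" where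
  "exp_age N M p h0 \<pi> t i =
     measure_pmf.expectation (state_pmf N M p h0 \<pi> t) (\<lambda>(H, h). real (h i))"

definition avg_AoI :: "nat \<Rightarrow> nat \<Rightarrow> real \<Rightarrow> ages \<Rightarrow> policy \<Rightarrow> ereal" where
  "avg_AoI N M p h0 \<pi> =
     limsup (\<lambda>T. ereal ((\<Sum>t<T. \<Sum>i<N. exp_age N M p h0 \<pi> t i) / (real N * real T)))"

definition opt_AoI :: "nat \<Rightarrow> nat \<Rightarrow> real \<Rightarrow> ages \<Rightarrow> ereal" where
  "opt_AoI N M p h0 = (INF \<pi> \<in> {\<pi>. valid_policy N \<pi>}. avg_AoI N M p h0 \<pi>)"

definition is_MMW :: "nat \<Rightarrow> nat \<Rightarrow> real \<Rightarrow> policy \<Rightarrow> bool" where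
  "is_MMW N M p \<pi> \<longleftrightarrow> valid_policy N \<pi> \<and>
     (\<forall>H h c. c \<in> occ_set N M \<longrightarrow>
        (\<forall>j<M. (\<exists>i<N. c i = j) \<longrightarrow>
           (\<exists>i\<in>\<pi> H h c. c i = j \<and>
              (\<forall>k<N. c k = j \<longrightarrow> p * real (h k) ^ 2 \<le> p * real (h i) ^ 2))))"

end

(* Let \<kappa> be the expected number of occupied cells and \<mu> = N / (p \<kappa>).
   Under Max-Weight every occupied cell serves its oldest UE, whose age dominates the cell
   average; as the UEs are exchangeable, E[1 / cell_size\<^sub>i] = \<kappa> / N, so the served
   ages sum in expectation to at least (\<kappa> / N) \<Sum>\<^sub>i h\<^sub>i.  Hence the expected
   total age L(t) satisfies L(t+1) \<le> N + (1 - p \<kappa> / N) L(t), and the average AoI of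
   Max-Weight is at most \<mu>.
   Any causal policy serves at most \<kappa> UEs per slot on average, so the Lyapunov function
   V = \<Sum>\<^sub>i (h\<^sub>i - \<mu> - 1)^2 drifts by at most 2 L(t) - N (\<mu> + 1) per slot; telescoping
   with V \<ge> 0 bounds the average AoI of every policy from below by (\<mu> + 1) / 2. *)

theory Submission
  imports Defs
begin

lemma expectation_bind_pmf_finite:
  fixes f :: "'b \<Rightarrow> real"
  assumes "finite (set_pmf A)" "\<And>x. x \<in> set_pmf A \<Longrightarrow> finite (set_pmf (K x))"
  shows "measure_pmf.expectation (A \<bind> K) f
    = measure_pmf.expectation A (\<lambda>x. measure_pmf.expectation (K x) f)"
proof -
  have "measure_pmf.expectation (A \<bind> K) f
      = (\<Sum>a\<in>set_pmf A. pmf A a *\<^sub>R measure_pmf.expectation (K a) f)"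
    using assms by (intro pmf_expectation_bind) auto
  also have "\<dots> = measure_pmf.expectation A (\<lambda>x. measure_pmf.expectation (K x) f)"
    using assms(1) by (intro integral_measure_pmf[symmetric]) auto
  finally show ?thesis .
qed

lemma expectation_mono_finite_pmf:
  fixes f g :: "'a \<Rightarrow> real"
  assumes "finite (set_pmf P)" "\<And>x. x \<in> set_pmf P \<Longrightarrow> f x \<le> g x"
  shows "measure_pmf.expectation P f \<le> measure_pmf.expectation P g"
  using assms
  by (intro integral_mono_AE) (auto simp: AE_measure_pmf_iff intro: integrable_measure_pmf_finite)

lemma finite_set_pmf_Pi_pmf_bernoulli:
  "finite S \<Longrightarrow> finite (set_pmf (Pi_pmf S False (\<lambda>_. bernoulli_pmf p)))"
  by (rule finite_subset[OF set_Pi_pmf_subset']) auto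

lemma expectation_Pi_pmf_bernoulli_component:
  fixes G :: "bool \<Rightarrow> real"
  assumes "finite S" "0 \<le> p" "p \<le> 1"
  shows "measure_pmf.expectation (Pi_pmf S False (\<lambda>_. bernoulli_pmf p)) (\<lambda>b. G (b i))
    = (if i \<in> S then p * G True + (1 - p) * G False else G False)"
proof -
  have "measure_pmf.expectation (Pi_pmf S False (\<lambda>_. bernoulli_pmf p)) (\<lambda>b. G (b i))
      = measure_pmf.expectation (map_pmf (\<lambda>b. b i) (Pi_pmf S False (\<lambda>_. bernoulli_pmf p))) G"
    by simp
  then show ?thesis
    using assms by (simp add: Pi_pmf_component mult.commute)
qed

lemma expectation_Pi_pmf_bernoulli_age_update:
  fixes g :: "nat \<Rightarrow> real"
  assumes "finite A" "S \<subseteq> A" "0 \<le> p" "p \<le> 1"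
  shows "measure_pmf.expectation (Pi_pmf S False (\<lambda>_. bernoulli_pmf p))
      (\<lambda>b. \<Sum>i\<in>A. g (if i \<in> S \<and> b i then 1 else h i + 1))
    = (\<Sum>i\<in>A. g (h i + 1)) - p * (\<Sum>i\<in>S. g (h i + 1) - g 1)"
proof -
  have "finite S"
    using assms(1,2) by (rule finite_subset[rotated])
  then have "measure_pmf.expectation (Pi_pmf S False (\<lambda>_. bernoulli_pmf p))
      (\<lambda>b. \<Sum>i\<in>A. g (if i \<in> S \<and> b i then 1 else h i + 1))
    = (\<Sum>i\<in>A. measure_pmf.expectation (Pi_pmf S False (\<lambda>_. bernoulli_pmf p))
        (\<lambda>b. g (if i \<in> S \<and> b i then 1 else h i + 1)))"
    by (intro Bochner_Integration.integral_sum integrable_measure_pmf_finite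
        finite_set_pmf_Pi_pmf_bernoulli)
  also have "\<dots> = (\<Sum>i\<in>A. g (h i + 1) - (if i \<in> S then p * (g (h i + 1) - g 1) else 0))"
  proof (intro sum.cong refl)
    fix i
    show "measure_pmf.expectation (Pi_pmf S False (\<lambda>_. bernoulli_pmf p))
        (\<lambda>b. g (if i \<in> S \<and> b i then 1 else h i + 1))
      = g (h i + 1) - (if i \<in> S then p * (g (h i + 1) - g 1) else 0)"
      using expectation_Pi_pmf_bernoulli_component[OF \<open>finite S\<close> assms(3,4),
          of "\<lambda>x. g (if i \<in> S \<and> x then 1 else h i + 1)" i]
      by (simp add: algebra_simps)
  qed
  also have "\<dots> = (\<Sum>i\<in>A. g (h i + 1)) - p * (\<Sum>i\<in>S. g (h i + 1) - g 1)"
    using assms(1,2)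
    by (simp add: sum_subtractf sum.inter_restrict[symmetric] Int_absorb1 flip: sum_distrib_left)
  finally show ?thesis .
qed

lemma occ_set_eq_PiE_dflt: "occ_set N M = PiE_dflt {..<N} 0 (\<lambda>_. {..<M})"
  unfolding occ_set_def PiE_dflt_def by (auto simp: not_less)

lemma finite_occ_set: "finite (occ_set N M)"
  unfolding occ_set_eq_PiE_dflt by (intro finite_PiE_dflt) auto

lemma occ_set_nonempty: "M \<ge> 1 \<Longrightarrow> occ_set N M \<noteq> {}"
  unfolding occ_set_def by (auto intro!: exI[of _ "\<lambda>_. 0"])

lemma set_pmf_occ_pmf: "M \<ge> 1 \<Longrightarrow> set_pmf (occ_pmf N M) = occ_set N M"
  unfolding occ_pmf_def by (intro set_pmf_of_set finite_occ_set occ_set_nonempty)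

lemma finite_set_pmf_occ_pmf: "M \<ge> 1 \<Longrightarrow> finite (set_pmf (occ_pmf N M))"
  by (simp add: set_pmf_occ_pmf finite_occ_set)

lemma occ_set_permute:
  assumes "\<sigma> permutes {..<N}" "c \<in> occ_set N M"
  shows "c \<circ> \<sigma> \<in> occ_set N M"
  using assms(2) permutes_in_image[OF assms(1)] permutes_not_in[OF assms(1)]
  unfolding occ_set_def by auto

lemma map_pmf_occ_pmf_permute:
  assumes "M \<ge> 1" "\<sigma> permutes {..<N}"
  shows "map_pmf (\<lambda>c. c \<circ> \<sigma>) (occ_pmf N M) = occ_pmf N M"
proof -
  have "inj_on (\<lambda>c. c \<circ> \<sigma>) (occ_set N M)"
    by (rule inj_onI) (metis comp_id permutes_inv_o(1)[OF assms(2)] o_assoc)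
  moreover have "(\<lambda>c. c \<circ> \<sigma>) ` occ_set N M = occ_set N M"
  proof
    show "(\<lambda>c. c \<circ> \<sigma>) ` occ_set N M \<subseteq> occ_set N M"
      using occ_set_permute[OF assms(2)] by blast
    show "occ_set N M \<subseteq> (\<lambda>c. c \<circ> \<sigma>) ` occ_set N M"
    proof
      fix c assume "c \<in> occ_set N M"
      then have "c \<circ> inv \<sigma> \<in> occ_set N M"
        by (rule occ_set_permute[OF permutes_inv[OF assms(2)]])
      moreover have "c = c \<circ> inv \<sigma> \<circ> \<sigma>"
        by (simp add: o_assoc[symmetric] permutes_inv_o(2)[OF assms(2)])
      ultimately show "c \<in> (\<lambda>c. c \<circ> \<sigma>) ` occ_set N M"
        by blast
    qed
  qed
  ultimately show ?thesis
    unfolding occ_pmf_def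
    by (simp add: map_pmf_of_set_inj finite_occ_set occ_set_nonempty[OF assms(1)])
qed

lemma valid_policy_subset:
  "valid_policy N \<pi> \<Longrightarrow> \<pi> H h c \<subseteq> {..<N}"
  unfolding valid_policy_def valid_sched_def by blast

lemma valid_policy_finite: "valid_policy N \<pi> \<Longrightarrow> finite (\<pi> H h c)"
  using valid_policy_subset[of N \<pi> H h c] finite_subset by blast

definition next_state_pmf :: "nat \<Rightarrow> nat \<Rightarrow> real \<Rightarrow> policy \<Rightarrow> history \<Rightarrow> ages \<Rightarrow> (history \<times> ages) pmf"
  where "next_state_pmf N M p \<pi> H h =
     occ_pmf N M \<bind> (\<lambda>c. Pi_pmf (\<pi> H h c) False (\<lambda>_. bernoulli_pmf p) \<bind> (\<lambda>succ.
       return_pmf (H @ [(h, c, \<pi> H h c)], (\<lambda>i. if i \<in> \<pi> H h c \<and> succ i then 1 else h i + 1))))"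

lemma state_pmf_Suc:
  "state_pmf N M p h0 \<pi> (Suc t) = state_pmf N M p h0 \<pi> t \<bind> (\<lambda>(H, h). next_state_pmf N M p \<pi> H h)"
  by (simp add: next_state_pmf_def Let_def case_prod_beta')

lemma finite_set_pmf_next_state_pmf:
  assumes "valid_policy N \<pi>" "M \<ge> 1"
  shows "finite (set_pmf (next_state_pmf N M p \<pi> H h))"
proof -
  have "finite (set_pmf (Pi_pmf (\<pi> H h c) False (\<lambda>_. bernoulli_pmf p)))" for c
    using valid_policy_finite[OF assms(1)] by (simp add: finite_set_pmf_Pi_pmf_bernoulli)
  then show ?thesis
    unfolding next_state_pmf_def set_bind_pmf set_return_pmf
    using finite_set_pmf_occ_pmf[OF assms(2)] by blast
qed

lemma finite_set_pmf_state_pmf: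
  assumes "valid_policy N \<pi>" "M \<ge> 1"
  shows "finite (set_pmf (state_pmf N M p h0 \<pi> t))"
proof (induction t)
  case (Suc t)
  then show ?case
    unfolding state_pmf_Suc set_bind_pmf
    by (rule finite_UN_I) (simp add: split_beta finite_set_pmf_next_state_pmf[OF assms])
qed simp

lemma expectation_next_state_sum_ages:
  fixes g :: "nat \<Rightarrow> real"
  assumes "valid_policy N \<pi>" "M \<ge> 1" "0 \<le> p" "p \<le> 1"
  shows "measure_pmf.expectation (next_state_pmf N M p \<pi> H h) (\<lambda>(H', h'). \<Sum>i<N. g (h' i))
    = measure_pmf.expectation (occ_pmf N M)
        (\<lambda>c. (\<Sum>i<N. g (h i + 1)) - p * (\<Sum>i\<in>\<pi> H h c. g (h i + 1) - g 1))"
proof -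
  have "measure_pmf.expectation (next_state_pmf N M p \<pi> H h) (\<lambda>(H', h'). \<Sum>i<N. g (h' i))
    = measure_pmf.expectation (occ_pmf N M) (\<lambda>c.
        measure_pmf.expectation (Pi_pmf (\<pi> H h c) False (\<lambda>_. bernoulli_pmf p))
          (\<lambda>b. \<Sum>i<N. g (if i \<in> \<pi> H h c \<and> b i then 1 else h i + 1)))"
    unfolding next_state_pmf_def
    using valid_policy_finite[OF assms(1)]
    by (subst expectation_bind_pmf_finite)
      (auto simp: finite_set_pmf_occ_pmf[OF assms(2)] finite_set_pmf_Pi_pmf_bernoulli
        expectation_bind_pmf_finite)
  also have "\<dots> = measure_pmf.expectation (occ_pmf N M)
        (\<lambda>c. (\<Sum>i<N. g (h i + 1)) - p * (\<Sum>i\<in>\<pi> H h c. g (h i + 1) - g 1))"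
    using valid_policy_subset[OF assms(1)] assms(3,4)
    by (simp add: expectation_Pi_pmf_bernoulli_age_update)
  finally show ?thesis .
qed

definition exp_age_sum :: "nat \<Rightarrow> nat \<Rightarrow> real \<Rightarrow> ages \<Rightarrow> policy \<Rightarrow> (nat \<Rightarrow> real) \<Rightarrow> nat \<Rightarrow> real"
  where "exp_age_sum N M p h0 \<pi> g t =
    measure_pmf.expectation (state_pmf N M p h0 \<pi> t) (\<lambda>(H, h). \<Sum>i<N. g (h i))"

lemma sum_exp_age_eq_exp_age_sum:
  assumes "valid_policy N \<pi>" "M \<ge> 1"
  shows "(\<Sum>i<N. exp_age N M p h0 \<pi> t i) = exp_age_sum N M p h0 \<pi> real t"
  unfolding exp_age_def exp_age_sum_def split_def
  by (intro Bochner_Integration.integral_sum[symmetric] integrable_measure_pmf_finite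
      finite_set_pmf_state_pmf assms)

lemma exp_age_sum_nonneg:
  "(\<And>x. 0 \<le> g x) \<Longrightarrow> 0 \<le> exp_age_sum N M p h0 \<pi> g t"
  unfolding exp_age_sum_def split_def by (simp add: sum_nonneg)

lemma exp_age_sum_add:
  assumes "valid_policy N \<pi>" "M \<ge> 1"
  shows "exp_age_sum N M p h0 \<pi> (\<lambda>x. f x + g x) t
    = exp_age_sum N M p h0 \<pi> f t + exp_age_sum N M p h0 \<pi> g t"
  unfolding exp_age_sum_def split_def sum.distrib
  by (intro Bochner_Integration.integral_add integrable_measure_pmf_finite
      finite_set_pmf_state_pmf assms)

lemma exp_age_sum_scale:
  "exp_age_sum N M p h0 \<pi> (\<lambda>x. a * g x) t = a * exp_age_sum N M p h0 \<pi> g t"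
  unfolding exp_age_sum_def split_def by (simp flip: sum_distrib_left)

lemma exp_age_sum_Suc_le:
  fixes f g :: "nat \<Rightarrow> real"
  assumes "valid_policy N \<pi>" "M \<ge> 1" "0 \<le> p" "p \<le> 1"
    and drift: "\<And>H h. measure_pmf.expectation (occ_pmf N M)
        (\<lambda>c. (\<Sum>i<N. g (h i + 1)) - p * (\<Sum>i\<in>\<pi> H h c. g (h i + 1) - g 1))
      \<le> a + (\<Sum>i<N. f (h i))"
  shows "exp_age_sum N M p h0 \<pi> g (Suc t) \<le> a + exp_age_sum N M p h0 \<pi> f t"
proof -
  let ?P = "state_pmf N M p h0 \<pi> t"
  have fin: "finite (set_pmf ?P)"
    by (rule finite_set_pmf_state_pmf[OF assms(1,2)])
  have "exp_age_sum N M p h0 \<pi> g (Suc t) = measure_pmf.expectation ?P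
      (\<lambda>(H, h). measure_pmf.expectation (next_state_pmf N M p \<pi> H h) (\<lambda>(H', h'). \<Sum>i<N. g (h' i)))"
    unfolding exp_age_sum_def state_pmf_Suc
    by (subst expectation_bind_pmf_finite)
      (auto simp: fin finite_set_pmf_next_state_pmf[OF assms(1,2)] split_def)
  also have "\<dots> = measure_pmf.expectation ?P (\<lambda>(H, h). measure_pmf.expectation (occ_pmf N M)
        (\<lambda>c. (\<Sum>i<N. g (h i + 1)) - p * (\<Sum>i\<in>\<pi> H h c. g (h i + 1) - g 1)))"
    by (simp add: expectation_next_state_sum_ages[OF assms(1-4)] split_beta)
  also have "\<dots> \<le> measure_pmf.expectation ?P (\<lambda>(H, h). a + (\<Sum>i<N. f (h i)))"
    by (intro expectation_mono_finite_pmf[OF fin], unfold split_beta, rule drift)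
  also have "\<dots> = a + exp_age_sum N M p h0 \<pi> f t"
    unfolding exp_age_sum_def split_def
    using fin by (simp add: integrable_measure_pmf_finite)
  finally show ?thesis .
qed

definition cell_size :: "nat \<Rightarrow> occupancy \<Rightarrow> nat \<Rightarrow> nat"
  where "cell_size N c i = card {k. k < N \<and> c k = c i}"

definition mean_occupied_cells :: "nat \<Rightarrow> nat \<Rightarrow> real"
  where "mean_occupied_cells N M =
    measure_pmf.expectation (occ_pmf N M) (\<lambda>c. real (card (c ` {..<N})))"

lemma sum_inv_cell_size_cell:
  assumes "k < N"
  shows "(\<Sum>i | i < N \<and> c i = c k. 1 / real (cell_size N c i)) = 1"
proof -
  let ?A = "{i. i < N \<and> c i = c k}"
  have "k \<in> ?A" "finite ?A"
    using assms by auto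
  then have "card ?A > 0"
    using card_gt_0_iff by blast
  moreover have "cell_size N c i = card ?A" if "i \<in> ?A" for i
    using that unfolding cell_size_def by simp
  ultimately show ?thesis
    using \<open>k \<in> ?A\<close> by auto
qed

lemma sum_inv_cell_size: "(\<Sum>i<N. 1 / real (cell_size N c i)) = real (card (c ` {..<N}))"
proof -
  have "(\<Sum>i<N. 1 / real (cell_size N c i))
      = (\<Sum>j\<in>c ` {..<N}. \<Sum>i | i \<in> {..<N} \<and> c i = j. 1 / real (cell_size N c i))"
    by (rule sum.image_gen) simp
  also have "\<dots> = (\<Sum>j\<in>c ` {..<N}. 1)"
    by (intro sum.cong refl) (auto simp: sum_inv_cell_size_cell)
  finally show ?thesis
    by simp
qed

lemma cell_size_permute:
  assumes "\<sigma> permutes {..<N}"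
  shows "cell_size N (c \<circ> \<sigma>) i = cell_size N c (\<sigma> i)"
proof -
  have "bij_betw \<sigma> {k. k < N \<and> c (\<sigma> k) = c (\<sigma> i)} {k. k < N \<and> c k = c (\<sigma> i)}"
    unfolding bij_betw_def
  proof
    show "inj_on \<sigma> {k. k < N \<and> c (\<sigma> k) = c (\<sigma> i)}"
      using permutes_inj_on[OF assms] .
    show "\<sigma> ` {k. k < N \<and> c (\<sigma> k) = c (\<sigma> i)} = {k. k < N \<and> c k = c (\<sigma> i)}"
      using permutes_in_image[OF assms] permutes_inverses[OF assms]
      by (auto simp: image_iff) (metis lessThan_iff)
  qed
  then show ?thesis
    unfolding cell_size_def comp_def by (rule bij_betw_same_card)
qed

lemma expectation_inv_cell_size:
  assumes "M \<ge> 1" "i < N"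
  shows "measure_pmf.expectation (occ_pmf N M) (\<lambda>c. 1 / real (cell_size N c i))
    = mean_occupied_cells N M / real N"
proof -
  let ?E = "\<lambda>j. measure_pmf.expectation (occ_pmf N M) (\<lambda>c. 1 / real (cell_size N c j))"
  have symmetric: "?E j = ?E 0" if "j < N" for j
  proof -
    let ?\<sigma> = "Transposition.transpose j 0"
    have \<sigma>: "?\<sigma> permutes {..<N}"
      using that by (intro permutes_swap_id) auto
    have "?E 0 = measure_pmf.expectation (map_pmf (\<lambda>c. c \<circ> ?\<sigma>) (occ_pmf N M))
        (\<lambda>c. 1 / real (cell_size N c 0))"
      by (simp only: map_pmf_occ_pmf_permute[OF assms(1) \<sigma>])
    also have "\<dots> = ?E j"
      by (simp add: cell_size_permute[OF \<sigma>])
    finally show ?thesis ..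
  qed
  have "mean_occupied_cells N M
      = measure_pmf.expectation (occ_pmf N M) (\<lambda>c. \<Sum>j<N. 1 / real (cell_size N c j))"
    unfolding mean_occupied_cells_def by (simp add: sum_inv_cell_size)
  also have "\<dots> = (\<Sum>j<N. ?E j)"
    by (intro Bochner_Integration.integral_sum integrable_measure_pmf_finite
        finite_set_pmf_occ_pmf assms(1))
  also have "\<dots> = (\<Sum>j<N. ?E i)"
    using symmetric assms(2) by (intro sum.cong refl) (metis lessThan_iff)
  also have "\<dots> = real N * ?E i"
    by simp
  finally show ?thesis
    using assms(2) by simp
qed

lemma mean_occupied_cells_ge_1:
  assumes "N \<ge> 1" "M \<ge> 1"
  shows "1 \<le> mean_occupied_cells N M"
proof -
  have "1 \<le> real (card (c ` {..<N}))" for c :: occupancy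
    using assms(1) by (simp add: Suc_le_eq card_gt_0_iff lessThan_empty_iff)
  then have "measure_pmf.expectation (occ_pmf N M) (\<lambda>_. 1) \<le> mean_occupied_cells N M"
    unfolding mean_occupied_cells_def
    by (intro expectation_mono_finite_pmf finite_set_pmf_occ_pmf assms(2))
  then show ?thesis
    by simp
qed

text \<open>Every UE gets weight 1 / cell_size, so each cell carries total weight 1 and is dominated
  by a single element of S.\<close>

lemma sum_div_cell_size_le_dominating:
  fixes x :: "nat \<Rightarrow> real"
  assumes "finite S" "\<And>k. k \<in> S \<Longrightarrow> k < N" "\<And>k. 0 \<le> x k"
    and dominating: "\<And>i. i < N \<Longrightarrow> \<exists>k\<in>S. c i = c k \<and> x i \<le> x k"
  shows "(\<Sum>i<N. x i / real (cell_size N c i)) \<le> (\<Sum>k\<in>S. x k)"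
proof -
  have "x i / real (cell_size N c i) \<le> (\<Sum>k | k \<in> S \<and> c i = c k. x k / real (cell_size N c i))"
    if i: "i < N" for i
  proof -
    obtain k where "k \<in> S" "c i = c k" "x i \<le> x k"
      using dominating[OF i] by blast
    moreover have "x k \<le> (\<Sum>k | k \<in> S \<and> c i = c k. x k)"
      using calculation assms(1,3) by (intro member_le_sum) auto
    ultimately show ?thesis
      by (simp add: divide_right_mono flip: sum_divide_distrib)
  qed
  then have "(\<Sum>i<N. x i / real (cell_size N c i))
      \<le> (\<Sum>i<N. \<Sum>k | k \<in> S \<and> c i = c k. x k / real (cell_size N c i))"
    by (intro sum_mono) simp
  also have "\<dots> = (\<Sum>k\<in>S. \<Sum>i | i \<in> {..<N} \<and> c i = c k. x k / real (cell_size N c i))"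
    using assms(1) by (intro sum.swap_restrict) simp_all
  also have "\<dots> = (\<Sum>k\<in>S. x k * (\<Sum>i | i < N \<and> c i = c k. 1 / real (cell_size N c i)))"
    by (simp add: sum_distrib_left)
  also have "\<dots> = (\<Sum>k\<in>S. x k)"
    using assms(2) by (simp add: sum_inv_cell_size_cell)
  finally show ?thesis .
qed

lemma MMW_dominating:
  assumes "is_MMW N M p \<pi>" "0 < p" "c \<in> occ_set N M" "i < N"
  shows "\<exists>k\<in>\<pi> H h c. c i = c k \<and> h i \<le> h k"
proof -
  have "c i < M"
    using assms(3,4) unfolding occ_set_def by blast
  then obtain k where "k \<in> \<pi> H h c" "c k = c i"
      and "\<forall>j<N. c j = c i \<longrightarrow> p * real (h j) ^ 2 \<le> p * real (h k) ^ 2"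
    using assms(1,4) unfolding is_MMW_def by (metis assms(3))
  then have "real (h i) ^ 2 \<le> real (h k) ^ 2"
    using assms(2,4) by simp
  then show ?thesis
    using \<open>k \<in> \<pi> H h c\<close> \<open>c k = c i\<close> by (intro bexI[of _ k]) auto
qed

lemma MMW_expectation_sched_ages_ge:
  assumes "is_MMW N M p \<pi>" "M \<ge> 1" "0 < p"
  shows "mean_occupied_cells N M / real N * (\<Sum>i<N. real (h i))
    \<le> measure_pmf.expectation (occ_pmf N M) (\<lambda>c. \<Sum>i\<in>\<pi> H h c. real (h i))"
proof -
  have valid: "valid_policy N \<pi>"
    using assms(1) unfolding is_MMW_def by blast
  have fin: "finite (set_pmf (occ_pmf N M))"
    by (rule finite_set_pmf_occ_pmf[OF assms(2)])
  have "measure_pmf.expectation (occ_pmf N M) (\<lambda>c. real (h i) / real (cell_size N c i))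
      = mean_occupied_cells N M / real N * real (h i)" if "i < N" for i
    using expectation_inv_cell_size[OF assms(2) that] by (simp add: divide_inverse)
  then have "mean_occupied_cells N M / real N * (\<Sum>i<N. real (h i))
      = (\<Sum>i<N. measure_pmf.expectation (occ_pmf N M) (\<lambda>c. real (h i) / real (cell_size N c i)))"
    by (simp add: sum_distrib_left)
  also have "\<dots> = measure_pmf.expectation (occ_pmf N M) (\<lambda>c. \<Sum>i<N. real (h i) / real (cell_size N c i))"
    using fin by (simp add: integrable_measure_pmf_finite)
  also have "\<dots> \<le> measure_pmf.expectation (occ_pmf N M) (\<lambda>c. \<Sum>i\<in>\<pi> H h c. real (h i))"
  proof (rule expectation_mono_finite_pmf[OF fin])
    fix c assume "c \<in> set_pmf (occ_pmf N M)"
    then have c: "c \<in> occ_set N M"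
      by (simp add: set_pmf_occ_pmf[OF assms(2)])
    show "(\<Sum>i<N. real (h i) / real (cell_size N c i)) \<le> (\<Sum>i\<in>\<pi> H h c. real (h i))"
    proof (rule sum_div_cell_size_le_dominating)
      show "finite (\<pi> H h c)"
        by (rule valid_policy_finite[OF valid])
      show "k < N" if "k \<in> \<pi> H h c" for k
        using that valid_policy_subset[OF valid, of H h c] by blast
      show "\<exists>k\<in>\<pi> H h c. c i = c k \<and> real (h i) \<le> real (h k)" if "i < N" for i
        using MMW_dominating[OF assms(1,3) c that, of H h] by simp
    qed simp
  qed
  finally show ?thesis .
qed

lemma card_le_occupied_cells:
  assumes "valid_sched N c S"
  shows "card S \<le> card (c ` {..<N})"
proof -
  have "inj_on c S" "S \<subseteq> {..<N}"
    using assms unfolding valid_sched_def inj_on_def by auto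
  then show ?thesis
    by (metis card_image card_mono finite_imageI finite_lessThan image_mono)
qed

lemma expectation_card_sched_le:
  assumes "valid_policy N \<pi>" "M \<ge> 1"
  shows "measure_pmf.expectation (occ_pmf N M) (\<lambda>c. real (card (\<pi> H h c)))
    \<le> mean_occupied_cells N M"
  unfolding mean_occupied_cells_def
proof (rule expectation_mono_finite_pmf[OF finite_set_pmf_occ_pmf[OF assms(2)]])
  fix c
  have "valid_sched N c (\<pi> H h c)"
    using assms(1) unfolding valid_policy_def by blast
  then show "real (card (\<pi> H h c)) \<le> real (card (c ` {..<N}))"
    by (simp add: card_le_occupied_cells)
qed

lemma MMW_exp_age_sum_Suc_le:
  assumes "is_MMW N M p \<pi>" "M \<ge> 1" "0 < p" "p \<le> 1"
  shows "exp_age_sum N M p h0 \<pi> real (Suc t)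
    \<le> real N + (1 - p * mean_occupied_cells N M / real N) * exp_age_sum N M p h0 \<pi> real t"
proof -
  let ?\<kappa> = "mean_occupied_cells N M"
  have valid: "valid_policy N \<pi>"
    using assms(1) unfolding is_MMW_def by blast
  have "exp_age_sum N M p h0 \<pi> real (Suc t)
      \<le> real N + exp_age_sum N M p h0 \<pi> (\<lambda>x. (1 - p * ?\<kappa> / real N) * real x) t"
  proof (rule exp_age_sum_Suc_le[OF valid assms(2) less_imp_le[OF assms(3)] assms(4)])
    fix H h
    have "measure_pmf.expectation (occ_pmf N M)
        (\<lambda>c. (\<Sum>i<N. real (h i + 1)) - p * (\<Sum>i\<in>\<pi> H h c. real (h i + 1) - real 1))
      = real N + (\<Sum>i<N. real (h i))
        - p * measure_pmf.expectation (occ_pmf N M) (\<lambda>c. \<Sum>i\<in>\<pi> H h c. real (h i))"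
      by (simp add: sum.distrib integrable_measure_pmf_finite finite_set_pmf_occ_pmf[OF assms(2)])
    also have "\<dots> \<le> real N + (\<Sum>i<N. real (h i)) - p * (?\<kappa> / real N * (\<Sum>i<N. real (h i)))"
      using mult_left_mono[OF MMW_expectation_sched_ages_ge[OF assms(1-3), of h H]] assms(3)
      by simp
    also have "\<dots> = real N + (\<Sum>i<N. (1 - p * ?\<kappa> / real N) * real (h i))"
      by (simp only: sum_distrib_left[symmetric]) (simp add: algebra_simps)
    finally show "measure_pmf.expectation (occ_pmf N M)
        (\<lambda>c. (\<Sum>i<N. real (h i + 1)) - p * (\<Sum>i\<in>\<pi> H h c. real (h i + 1) - real 1))
      \<le> real N + (\<Sum>i<N. (1 - p * ?\<kappa> / real N) * real (h i))" .
  qed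
  then show ?thesis
    by (simp only: exp_age_sum_scale)
qed

text \<open>The drift of the Lyapunov function (h - \<mu> - 1)^2: an unserved UE of age h increases it
  by 2h - 2\<mu> - 1, and serving it can add at most \<mu>^2, its value at age 1.\<close>

lemma exp_age_sum_quadratic_Suc_le:
  fixes \<mu> :: real
  assumes "valid_policy N \<pi>" "M \<ge> 1" "0 \<le> p" "p \<le> 1"
  shows "exp_age_sum N M p h0 \<pi> (\<lambda>x. (real x - \<mu> - 1)\<^sup>2) (Suc t)
    \<le> p * \<mu>\<^sup>2 * mean_occupied_cells N M - real N * (2 * \<mu> + 1)
      + exp_age_sum N M p h0 \<pi> (\<lambda>x. (real x - \<mu> - 1)\<^sup>2 + 2 * real x) t"
proof (rule exp_age_sum_Suc_le[OF assms])
  fix H h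
  let ?S = "\<lambda>c. \<pi> H h c"
  have "(\<Sum>i<N. (real (h i + 1) - \<mu> - 1)\<^sup>2)
        - p * (\<Sum>i\<in>?S c. (real (h i + 1) - \<mu> - 1)\<^sup>2 - (real 1 - \<mu> - 1)\<^sup>2)
      \<le> (\<Sum>i<N. (real (h i) - \<mu>)\<^sup>2) + p * \<mu>\<^sup>2 * real (card (?S c))" for c
  proof -
    have "- (real (card (?S c)) * \<mu>\<^sup>2) \<le> (\<Sum>i\<in>?S c. (real (h i) - \<mu>)\<^sup>2 - \<mu>\<^sup>2)"
      using sum_mono[of "?S c" "\<lambda>_. - \<mu>\<^sup>2" "\<lambda>i. (real (h i) - \<mu>)\<^sup>2 - \<mu>\<^sup>2"] by simp
    then have "0 \<le> p * (real (card (?S c)) * \<mu>\<^sup>2 + (\<Sum>i\<in>?S c. (real (h i) - \<mu>)\<^sup>2 - \<mu>\<^sup>2))"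
      using assms(3) by simp
    then show ?thesis
      by (simp add: algebra_simps)
  qed
  then have "measure_pmf.expectation (occ_pmf N M) (\<lambda>c. (\<Sum>i<N. (real (h i + 1) - \<mu> - 1)\<^sup>2)
        - p * (\<Sum>i\<in>?S c. (real (h i + 1) - \<mu> - 1)\<^sup>2 - (real 1 - \<mu> - 1)\<^sup>2))
      \<le> measure_pmf.expectation (occ_pmf N M)
          (\<lambda>c. (\<Sum>i<N. (real (h i) - \<mu>)\<^sup>2) + p * \<mu>\<^sup>2 * real (card (?S c)))"
    by (intro expectation_mono_finite_pmf finite_set_pmf_occ_pmf assms(2))
  also have "\<dots> = (\<Sum>i<N. (real (h i) - \<mu>)\<^sup>2)
      + p * \<mu>\<^sup>2 * measure_pmf.expectation (occ_pmf N M) (\<lambda>c. real (card (?S c)))"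
    by (simp add: integrable_measure_pmf_finite finite_set_pmf_occ_pmf[OF assms(2)])
  also have "\<dots> \<le> (\<Sum>i<N. (real (h i) - \<mu>)\<^sup>2) + p * \<mu>\<^sup>2 * mean_occupied_cells N M"
    using expectation_card_sched_le[OF assms(1,2)] assms(3) by (simp add: mult_left_mono)
  also have "\<dots> = p * \<mu>\<^sup>2 * mean_occupied_cells N M - real N * (2 * \<mu> + 1)
      + (\<Sum>i<N. (real (h i) - \<mu> - 1)\<^sup>2 + 2 * real (h i))"
    by (simp add: power2_eq_square algebra_simps sum.distrib sum_subtractf flip: sum_distrib_left)
  finally show "measure_pmf.expectation (occ_pmf N M) (\<lambda>c. (\<Sum>i<N. (real (h i + 1) - \<mu> - 1)\<^sup>2)
        - p * (\<Sum>i\<in>?S c. (real (h i + 1) - \<mu> - 1)\<^sup>2 - (real 1 - \<mu> - 1)\<^sup>2))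
      \<le> p * \<mu>\<^sup>2 * mean_occupied_cells N M - real N * (2 * \<mu> + 1)
        + (\<Sum>i<N. (real (h i) - \<mu> - 1)\<^sup>2 + 2 * real (h i))" .
qed

lemma MMW_cumulative_age_le:
  assumes "is_MMW N M p \<pi>" "M \<ge> 1" "0 < p" "p \<le> 1"
  shows "p * mean_occupied_cells N M / real N * (\<Sum>t<T. exp_age_sum N M p h0 \<pi> real t)
    \<le> exp_age_sum N M p h0 \<pi> real 0 + real N * real T"
proof -
  let ?L = "exp_age_sum N M p h0 \<pi> real"
  have "?L T - ?L 0 = (\<Sum>t<T. ?L (Suc t) - ?L t)"
    by (rule sum_lessThan_telescope[symmetric])
  also have "\<dots> \<le> (\<Sum>t<T. real N - p * mean_occupied_cells N M / real N * ?L t)"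
    using MMW_exp_age_sum_Suc_le[OF assms] by (intro sum_mono) (simp add: algebra_simps)
  also have "\<dots> = real N * real T - p * mean_occupied_cells N M / real N * (\<Sum>t<T. ?L t)"
    by (simp add: sum_subtractf sum_distrib_left)
  finally show ?thesis
    using exp_age_sum_nonneg[of real N M p h0 \<pi> T] by linarith
qed

lemma cumulative_age_ge:
  fixes \<mu> :: real
  assumes "valid_policy N \<pi>" "M \<ge> 1" "0 \<le> p" "p \<le> 1"
  shows "real T * (real N * (2 * \<mu> + 1) - p * \<mu>\<^sup>2 * mean_occupied_cells N M)
      - exp_age_sum N M p h0 \<pi> (\<lambda>x. (real x - \<mu> - 1)\<^sup>2) 0
    \<le> 2 * (\<Sum>t<T. exp_age_sum N M p h0 \<pi> real t)"
proof -
  let ?L = "exp_age_sum N M p h0 \<pi> real"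
  let ?V = "exp_age_sum N M p h0 \<pi> (\<lambda>x. (real x - \<mu> - 1)\<^sup>2)"
  define A where "A = p * \<mu>\<^sup>2 * mean_occupied_cells N M - real N * (2 * \<mu> + 1)"
  have "?V (Suc t) - ?V t \<le> A + 2 * ?L t" for t
    using exp_age_sum_quadratic_Suc_le[OF assms, of h0 \<mu> t]
    by (simp add: A_def exp_age_sum_add[OF assms(1,2)] exp_age_sum_scale)
  then have "?V T - ?V 0 \<le> (\<Sum>t<T. A + 2 * ?L t)"
    unfolding sum_lessThan_telescope[symmetric] by (rule sum_mono)
  also have "\<dots> = real T * A + 2 * (\<Sum>t<T. ?L t)"
    by (simp add: sum.distrib sum_distrib_left)
  finally have "?V T - ?V 0 \<le> real T * A + 2 * (\<Sum>t<T. ?L t)" .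
  moreover have "0 \<le> ?V T"
    by (rule exp_age_sum_nonneg) simp
  moreover have "real T * (real N * (2 * \<mu> + 1) - p * \<mu>\<^sup>2 * mean_occupied_cells N M) = - (real T * A)"
    by (simp add: A_def algebra_simps)
  ultimately show ?thesis
    by linarith
qed

lemma LIMSEQ_affine_div:
  fixes a b c :: real
  assumes "c \<noteq> 0"
  shows "(\<lambda>T. (a * real T + b) / (c * real T)) \<longlonglongrightarrow> a / c"
proof (rule Lim_transform_eventually)
  show "(\<lambda>T. a / c + (b / c) / real T) \<longlonglongrightarrow> a / c"
    using tendsto_add[OF tendsto_const lim_const_over_n, of "a / c" "b / c"] by simp
  show "\<forall>\<^sub>F T in sequentially. a / c + (b / c) / real T = (a * real T + b) / (c * real T)"
    using eventually_gt_at_top[of 0] by eventually_elim (use assms in \<open>simp add: field_simps\<close>)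
qed

lemma Limsup_div_le_of_affine_bound:
  fixes S :: "nat \<Rightarrow> real"
  assumes "0 < c" "\<And>T. S T \<le> a * real T + b"
  shows "limsup (\<lambda>T. ereal (S T / (c * real T))) \<le> ereal (a / c)"
proof -
  have "limsup (\<lambda>T. ereal (S T / (c * real T)))
      \<le> limsup (\<lambda>T. ereal ((a * real T + b) / (c * real T)))"
    using assms by (intro Limsup_mono always_eventually allI) (simp add: divide_right_mono)
  also have "\<dots> = ereal (a / c)"
    using assms(1) by (intro lim_imp_Limsup tendsto_ereal LIMSEQ_affine_div) simp_all
  finally show ?thesis .
qed

lemma Liminf_div_ge_of_affine_bound:
  fixes S :: "nat \<Rightarrow> real"
  assumes "0 < c" "\<And>T. a * real T + b \<le> S T"
  shows "ereal (a / c) \<le> liminf (\<lambda>T. ereal (S T / (c * real T)))"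
proof -
  have "ereal (a / c) = liminf (\<lambda>T. ereal ((a * real T + b) / (c * real T)))"
    using assms(1) by (intro lim_imp_Liminf[symmetric] tendsto_ereal LIMSEQ_affine_div) simp_all
  also have "\<dots> \<le> liminf (\<lambda>T. ereal (S T / (c * real T)))"
    using assms by (intro Liminf_mono always_eventually allI) (simp add: divide_right_mono)
  finally show ?thesis .
qed

lemma avg_AoI_eq_limsup:
  assumes "valid_policy N \<pi>" "M \<ge> 1"
  shows "avg_AoI N M p h0 \<pi>
    = limsup (\<lambda>T. ereal ((\<Sum>t<T. exp_age_sum N M p h0 \<pi> real t) / (real N * real T)))"
  unfolding avg_AoI_def by (simp add: sum_exp_age_eq_exp_age_sum[OF assms])

lemma MMW_avg_AoI_le:
  assumes "is_MMW N M p \<pi>" "N \<ge> 1" "M \<ge> 1" "0 < p" "p \<le> 1"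
  shows "avg_AoI N M p h0 \<pi> \<le> ereal (real N / (p * mean_occupied_cells N M))"
proof -
  let ?L = "exp_age_sum N M p h0 \<pi> real"
  define \<mu> where "\<mu> = real N / (p * mean_occupied_cells N M)"
  have valid: "valid_policy N \<pi>"
    using assms(1) unfolding is_MMW_def by blast
  have "1 \<le> mean_occupied_cells N M"
    by (rule mean_occupied_cells_ge_1[OF assms(2,3)])
  then have "0 \<le> \<mu>" and \<mu>_inverse: "\<mu> * (p * mean_occupied_cells N M / real N) = 1"
    using assms(2,4) by (simp_all add: \<mu>_def)
  have "(\<Sum>t<T. ?L t) \<le> (real N * \<mu>) * real T + \<mu> * ?L 0" for T
  proof -
    have "(\<Sum>t<T. ?L t) = \<mu> * (p * mean_occupied_cells N M / real N * (\<Sum>t<T. ?L t))"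
      by (simp only: mult.assoc[symmetric] \<mu>_inverse)
    also have "\<dots> \<le> \<mu> * (?L 0 + real N * real T)"
      using MMW_cumulative_age_le[OF assms(1,3-5), where T = T] \<open>0 \<le> \<mu>\<close>
      by (rule mult_left_mono)
    finally show ?thesis
      by (simp add: algebra_simps)
  qed
  then have "avg_AoI N M p h0 \<pi> \<le> ereal (real N * \<mu> / real N)"
    unfolding avg_AoI_eq_limsup[OF valid assms(3)]
    using assms(2) by (intro Limsup_div_le_of_affine_bound) simp_all
  then show ?thesis
    using assms(2) by (simp add: \<mu>_def)
qed

lemma avg_AoI_ge:
  assumes "valid_policy N \<pi>" "N \<ge> 1" "M \<ge> 1" "0 < p" "p \<le> 1"
  shows "ereal ((real N / (p * mean_occupied_cells N M) + 1) / 2) \<le> avg_AoI N M p h0 \<pi>"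
proof -
  let ?L = "exp_age_sum N M p h0 \<pi> real"
  define \<mu> where "\<mu> = real N / (p * mean_occupied_cells N M)"
  define V0 where "V0 = exp_age_sum N M p h0 \<pi> (\<lambda>x. (real x - \<mu> - 1)\<^sup>2) 0"
  have "1 \<le> mean_occupied_cells N M"
    by (rule mean_occupied_cells_ge_1[OF assms(2,3)])
  then have "p * \<mu>\<^sup>2 * mean_occupied_cells N M = real N * \<mu>"
    using assms(4) by (simp add: \<mu>_def power2_eq_square)
  then have "real N * ((\<mu> + 1) / 2) * real T + - V0 / 2 \<le> (\<Sum>t<T. ?L t)" for T
    using cumulative_age_ge[OF assms(1,3) less_imp_le[OF assms(4)] assms(5), of T \<mu> h0]
    by (simp add: V0_def field_simps)
  then have "ereal (real N * ((\<mu> + 1) / 2) / real N)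
      \<le> liminf (\<lambda>T. ereal ((\<Sum>t<T. ?L t) / (real N * real T)))"
    using assms(2) by (intro Liminf_div_ge_of_affine_bound[where b = "- V0 / 2"]) simp_all
  also have "\<dots> \<le> avg_AoI N M p h0 \<pi>"
    unfolding avg_AoI_eq_limsup[OF assms(1,3)] by (rule Liminf_le_Limsup) simp
  finally show ?thesis
    using assms(2) by (simp add: \<mu>_def)
qed

theorem theorem1:
  fixes N M :: nat and p :: real and h0 :: ages and \<pi> :: policy
  assumes "N \<ge> 1" and "M \<ge> 1"
    and "0 < p" and "p \<le> 1"
    and "\<forall>i<N. h0 i \<ge> 1"
    and "is_MMW N M p \<pi>"
  shows "avg_AoI N M p h0 \<pi> \<le> 2 * opt_AoI N M p h0"
proof -
  define \<mu> where "\<mu> = real N / (p * mean_occupied_cells N M)"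
  have "avg_AoI N M p h0 \<pi> \<le> ereal \<mu>"
    unfolding \<mu>_def by (rule MMW_avg_AoI_le[OF assms(6,1-4)])
  also have "\<dots> \<le> 2 * ereal ((\<mu> + 1) / 2)"
    by simp
  also have "\<dots> \<le> 2 * opt_AoI N M p h0"
    unfolding opt_AoI_def \<mu>_def using assms(1-4)
    by (intro ereal_mult_left_mono INF_greatest avg_AoI_ge) auto
  finally show ?thesis .
qed

end
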